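(* Let $\Gamma$ be a countable group acting affinely on $\mathbb{R}^n$, let $\mathsf W\subseteq\mathbb{R}^n$ be a connected open subset, and let $h:\mathsf W\to\mathbb{R}^n$ be a $C^1$ map preserving $\Gamma$-orbits (i.e. $h(x)\in\Gamma\cdot x$ for all $x\in\mathsf W$). Then there is $\gamma\in\Gamma$, acting by $\gamma\cdot x=A_\gamma x+b_\gamma$, such that $h(x)=A_\gamma x+b_\gamma$ for all $x\in\mathsf W$. *)

theory Defs
  imports "HOL-Analysis.Analysis" "HOL-Algebra.Group"
begin

definition affine_action ::
  "('g, 'm) monoid_scheme \<Rightarrow> ('g \<Rightarrow> real^'n^'n) \<Rightarrow> ('g \<Rightarrow> real^'n) \<Rightarrow> bool" where
  "affine_action G A b \<longleftrightarrow>
     A \<one>\<^bsub>G\<^esub> = mat 1 \<and> b \<one>\<^bsub>G\<^esub> = 0 \<and>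
     (\<forall>g\<in>carrier G. \<forall>h\<in>carrier G.
        A (g \<otimes>\<^bsub>G\<^esub> h) = A g ** A h \<and>
        b (g \<otimes>\<^bsub>G\<^esub> h) = A g *v b h + b g)"

definition affine_orbit ::
  "('g, 'm) monoid_scheme \<Rightarrow> ('g \<Rightarrow> real^'n^'n) \<Rightarrow> ('g \<Rightarrow> real^'n) \<Rightarrow> real^'n \<Rightarrow> (real^'n) set" where
  "affine_orbit G A b x = (\<lambda>g. A g *v x + b g) ` carrier G"

end

theory Submission
  imports Defs
begin

(* Along a segment in W, h is a C^1 curve g that at every parameter agrees with one of countably
   many affine lines.  At a limit point of the set where it agrees with a given line, its
   derivative is the slope of that line; the other parameters are isolated points of such a set,
   so there are only countably many of them.  Hence t \<mapsto> (g' t, g t - t g' t) is continuous with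
   countable image on an interval, so constant, and h is affine on every segment in W.  Then h'
   is locally constant, so h is affine on the connected set W.  Finally, W is covered by the
   countably many affine sets on which h agrees with some group element; proper affine subspaces
   are null sets, so one of them is the whole space. *)

lemma countable_isolated_points:
  fixes S :: "'a::second_countable_topology set"
  shows "countable {x\<in>S. \<not> x islimpt S}"
proof -
  obtain \<B> :: "'a set set" where "countable \<B>"
    and basis: "\<And>U. open U \<Longrightarrow> \<exists>\<U>. \<U> \<subseteq> \<B> \<and> U = \<Union>\<U>"
    by (meson univ_second_countable)
  have "\<exists>B\<in>\<B>. B \<inter> S = {x}" if "x \<in> S" "\<not> x islimpt S" for x
  proof -
    obtain U where "open U" "x \<in> U" "\<forall>y\<in>S. y \<in> U \<longrightarrow> y = x"
      using \<open>\<not> x islimpt S\<close> unfolding islimpt_def by blast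
    moreover obtain B where "B \<in> \<B>" "x \<in> B" "B \<subseteq> U"
      using basis[OF \<open>open U\<close>] \<open>x \<in> U\<close> by blast
    ultimately show ?thesis using \<open>x \<in> S\<close> by blast
  qed
  then obtain f
    where f: "\<And>x. x \<in> {x\<in>S. \<not> x islimpt S} \<Longrightarrow> f x \<in> \<B> \<and> f x \<inter> S = {x}"
    by (metis (mono_tags, lifting) mem_Collect_eq)
  have "inj_on f {x\<in>S. \<not> x islimpt S}"
    by (rule inj_onI) (metis f singleton_inject)
  moreover have "f ` {x\<in>S. \<not> x islimpt S} \<subseteq> \<B>" using f by blast
  ultimately show ?thesis
    by (meson \<open>countable \<B>\<close> countable_image_inj_on countable_subset)
qed

lemma vector_derivative_eq_slope_at_limpt:
  fixes g :: "real \<Rightarrow> 'a::real_normed_vector"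
  assumes "(g has_vector_derivative g') (at t)" and "t \<in> E" and "t islimpt E"
    and "\<And>s. s \<in> E \<Longrightarrow> g s = a + s *\<^sub>R v"
  shows "g' = v"
proof -
  have "((\<lambda>s. a + s *\<^sub>R v) has_vector_derivative v) (at t within E)"
    by (auto intro!: derivative_eq_intros)
  then have "(g has_vector_derivative v) (at t within E)"
    by (rule has_vector_derivative_transform_within[OF _ zero_less_one \<open>t \<in> E\<close>])
       (simp add: assms(4))
  moreover have "(g has_vector_derivative g') (at t within E)"
    using assms(1) has_vector_derivative_at_within by blast
  moreover have "at t within E \<noteq> bot"
    using \<open>t islimpt E\<close> by (simp add: trivial_limit_within)
  ultimately show ?thesis using vector_derivative_unique_within by blast
qed

lemma affine_Collect_linear_eq:
  fixes f g :: "'a::real_vector \<Rightarrow> 'b::real_vector"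
  assumes "linear f" and "linear g"
  shows "affine {x. f x + a = g x + b}"
  unfolding affine_def
proof (intro ballI allI impI, simp)
  fix x y u v assume x: "f x + a = g x + b" and y: "f y + a = g y + b" and "u + v = (1::real)"
  have affine_combination: "F (u *\<^sub>R x + v *\<^sub>R y) + c = u *\<^sub>R (F x + c) + v *\<^sub>R (F y + c)"
    if "linear F" for F :: "'a \<Rightarrow> 'b" and c
  proof -
    have "F (u *\<^sub>R x + v *\<^sub>R y) + c = u *\<^sub>R F x + v *\<^sub>R F y + (u + v) *\<^sub>R c"
      using that \<open>u + v = 1\<close> by (simp add: linear_add linear_scale)
    also have "\<dots> = u *\<^sub>R (F x + c) + v *\<^sub>R (F y + c)"
      by (simp add: algebra_simps)
    finally show ?thesis .
  qed
  show "f (u *\<^sub>R x + v *\<^sub>R y) + a = g (u *\<^sub>R x + v *\<^sub>R y) + b"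
    by (simp only: affine_combination assms x y)
qed

lemma curve_on_countably_many_lines_affine:
  fixes g g' :: "real \<Rightarrow> 'a::real_normed_vector"
  assumes "connected I"
    and deriv: "\<And>t. t \<in> I \<Longrightarrow> (g has_vector_derivative g' t) (at t)"
    and "continuous_on I g'" and "countable K"
    and lines: "\<And>t. t \<in> I \<Longrightarrow> \<exists>k\<in>K. g t = a k + t *\<^sub>R v k"
    and "s \<in> I" and "t \<in> I"
  shows "g t = g s + (t - s) *\<^sub>R g' s"
proof -
  define E where "E k = {r\<in>I. g r = a k + r *\<^sub>R v k}" for k
  define \<Phi> where "\<Phi> r = (g' r, g r - r *\<^sub>R g' r)" for r
  define isolated where "isolated = (\<Union>k\<in>K. {r\<in>E k. \<not> r islimpt E k})"
  have "continuous_on I g"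
    using deriv by (meson continuous_at_imp_continuous_on has_vector_derivative_continuous)
  then have "continuous_on I \<Phi>"
    unfolding \<Phi>_def by (intro continuous_intros \<open>continuous_on I g'\<close>)
  then have "connected (\<Phi> ` I)"
    using \<open>connected I\<close> connected_continuous_image by blast
  have "\<Phi> ` I \<subseteq> \<Phi> ` isolated \<union> (\<lambda>k. (v k, a k)) ` K"
  proof (rule image_subsetI)
    fix r assume "r \<in> I"
    obtain k where "k \<in> K" "r \<in> E k" using lines \<open>r \<in> I\<close> by (auto simp: E_def)
    show "\<Phi> r \<in> \<Phi> ` isolated \<union> (\<lambda>k. (v k, a k)) ` K"
    proof (cases "r islimpt E k")
      case True
      have "g' r = v k"
        by (rule vector_derivative_eq_slope_at_limpt[OF deriv[OF \<open>r \<in> I\<close>] \<open>r \<in> E k\<close> True])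
           (simp add: E_def)
      then have "\<Phi> r = (v k, a k)" using \<open>r \<in> E k\<close> by (simp add: \<Phi>_def E_def)
      then show ?thesis using \<open>k \<in> K\<close> by simp
    next
      case False
      then have "r \<in> isolated" using \<open>k \<in> K\<close> \<open>r \<in> E k\<close> by (auto simp: isolated_def)
      then show ?thesis by simp
    qed
  qed
  moreover have "countable isolated"
    unfolding isolated_def by (intro countable_UN[OF \<open>countable K\<close>] countable_isolated_points)
  ultimately have "countable (\<Phi> ` I)"
    using \<open>countable K\<close> by (meson countable_Un countable_image countable_subset)
  then have "\<Phi> s = \<Phi> t"
    using connected_uncountable[OF \<open>connected (\<Phi> ` I)\<close> imageI[OF \<open>s \<in> I\<close>] imageI[OF \<open>t \<in> I\<close>]]
    by blast
  then show ?thesis by (simp add: \<Phi>_def algebra_simps)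
qed

lemma segment_affine_if_countably_many_affine_pieces:
  fixes h :: "'a::real_normed_vector \<Rightarrow> 'b::real_normed_vector"
  assumes deriv: "\<And>x. x \<in> W \<Longrightarrow> (h has_derivative blinfun_apply (h' x)) (at x)"
    and "continuous_on W h'" and "countable K"
    and "\<And>k. k \<in> K \<Longrightarrow> linear (L k)"
    and pieces: "\<And>x. x \<in> W \<Longrightarrow> \<exists>k\<in>K. h x = L k x + c k"
    and "closed_segment y z \<subseteq> W"
  shows "h z = h y + h' y (z - y)"
proof -
  define p where "p t = y + t *\<^sub>R (z - y)" for t :: real
  have pW: "p t \<in> W" if "t \<in> {0..1}" for t
    using that \<open>closed_segment y z \<subseteq> W\<close>
    by (auto simp: p_def closed_segment_def algebra_simps intro!: exI[of _ t])
  have "(h \<circ> p) 1 = (h \<circ> p) 0 + (1 - 0) *\<^sub>R h' (p 0) (z - y)"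
  proof (rule curve_on_countably_many_lines_affine[where I="{0..1}" and K=K
        and a="\<lambda>k. L k y + c k" and v="\<lambda>k. L k (z - y)"])
    fix t :: real assume "t \<in> {0..1}"
    have "(p has_derivative (\<lambda>s. s *\<^sub>R (z - y))) (at t)"
      unfolding p_def by (auto intro!: derivative_eq_intros)
    from has_derivative_compose[OF this deriv[OF pW[OF \<open>t \<in> {0..1}\<close>]]]
    show "((h \<circ> p) has_vector_derivative h' (p t) (z - y)) (at t)"
      by (simp add: has_vector_derivative_def o_def blinfun.scaleR_right)
    obtain k where "k \<in> K" "h (p t) = L k (p t) + c k"
      using pieces pW[OF \<open>t \<in> {0..1}\<close>] by blast
    moreover have "L k (p t) = L k y + t *\<^sub>R L k (z - y)"
      using assms(4)[OF \<open>k \<in> K\<close>] by (simp add: p_def linear_add linear_scale)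
    ultimately show "\<exists>k\<in>K. (h \<circ> p) t = (L k y + c k) + t *\<^sub>R L k (z - y)"
      by (auto simp: algebra_simps)
  next
    have "continuous_on {0..1} p"
      unfolding p_def by (intro continuous_intros)
    moreover have "p ` {0..1} \<subseteq> W" using pW by blast
    ultimately have "continuous_on {0..1} (\<lambda>t. h' (p t))"
      by (rule continuous_on_compose2[OF \<open>continuous_on W h'\<close>])
    then show "continuous_on {0..1} (\<lambda>t. h' (p t) (z - y))"
      by (intro continuous_intros)
  qed (auto simp: \<open>countable K\<close>)
  then show ?thesis by (simp add: p_def)
qed

lemma affine_if_affine_on_segments:
  fixes h :: "'a::real_normed_vector \<Rightarrow> 'b::real_normed_vector"
  assumes "open W" and "connected W"
    and deriv: "\<And>x. x \<in> W \<Longrightarrow> (h has_derivative blinfun_apply (h' x)) (at x)"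
    and segment: "\<And>y z. closed_segment y z \<subseteq> W \<Longrightarrow> h z = h y + h' y (z - y)"
  obtains M :: "'a \<Rightarrow>\<^sub>L 'b" and c where "\<And>x. x \<in> W \<Longrightarrow> h x = M x + c"
proof -
  define p where "p x = (h' x, h x - h' x x)" for x
  have "p constant_on W"
  proof (rule locally_constant_imp_constant[OF \<open>connected W\<close>])
    fix x assume "x \<in> W"
    then obtain r where "r > 0" and ball: "ball x r \<subseteq> W"
      using \<open>open W\<close> open_contains_ball by blast
    have affine_ball: "h z = h x + h' x (z - x)" if "z \<in> ball x r" for z
    proof -
      have "closed_segment x z \<subseteq> ball x r"
        using closed_segment_subset[OF _ that convex_ball] \<open>r > 0\<close> by simp
      then show ?thesis using segment ball by blast
    qed
    have h'_const: "h' z = h' x" if "z \<in> ball x r" for z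
    proof -
      have "((\<lambda>w. h x + h' x (w - x)) has_derivative blinfun_apply (h' x)) (at z)"
        by (auto intro!: derivative_eq_intros simp: blinfun.diff_right)
      then have "(h has_derivative blinfun_apply (h' x)) (at z)"
        by (rule has_derivative_transform_within_open[OF _ open_ball that]) (metis affine_ball)
      then show ?thesis
        using deriv ball that has_derivative_unique blinfun_apply_inject by blast
    qed
    have p_const: "p z = p x" if "z \<in> ball x r" for z
    proof -
      have "h z - h' x z = h x - h' x x"
        using affine_ball[OF that] by (simp add: blinfun.diff_right)
      then show ?thesis using h'_const[OF that] by (simp add: p_def)
    qed
    show "\<exists>T. openin (top_of_set W) T \<and> x \<in> T \<and> (\<forall>z\<in>T. p z = p x)"
      using p_const \<open>r > 0\<close> open_subset[OF ball open_ball] centre_in_ball by blast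
  qed
  then obtain M c where "\<And>x. x \<in> W \<Longrightarrow> p x = (M, c)"
    unfolding constant_on_def by (metis surj_pair)
  then show thesis
    by (intro that[of M c]) (auto simp: p_def diff_eq_eq add.commute)
qed

lemma countable_affine_cover_of_open_imp_UNIV:
  fixes Z :: "'k \<Rightarrow> 'a::euclidean_space set"
  assumes "countable K" and affine: "\<And>k. k \<in> K \<Longrightarrow> affine (Z k)"
    and "open U" and "U \<noteq> {}" and "U \<subseteq> (\<Union>k\<in>K. Z k)"
  shows "\<exists>k\<in>K. Z k = UNIV"
proof (rule ccontr)
  assume no_UNIV: "\<not> (\<exists>k\<in>K. Z k = UNIV)"
  have "negligible (Z k)" if "k \<in> K" for k
  proof -
    have "interior (Z k) = {}"
    proof (rule ccontr)
      assume "interior (Z k) \<noteq> {}"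
      then have "affine hull Z k = UNIV" by (rule affine_hull_nonempty_interior)
      then show False using hull_same[of affine, OF affine[OF that]] no_UNIV that by auto
    qed
    then show ?thesis
      using affine[OF that] affine_imp_convex negligible_convex_interior by blast
  qed
  then have "negligible (\<Union>k\<in>K. Z k)"
    using \<open>countable K\<close> by (intro negligible_countable_Union) auto
  then have "negligible U"
    using \<open>U \<subseteq> (\<Union>k\<in>K. Z k)\<close> negligible_subset by blast
  then show False
    using open_not_negligible \<open>open U\<close> \<open>U \<noteq> {}\<close> by blast
qed

theorem lemma1:
  fixes G :: "('g, 'm) monoid_scheme"
    and A :: "'g \<Rightarrow> real^'n^'n" and b :: "'g \<Rightarrow> real^'n"
    and W :: "(real^'n) set" and h :: "real^'n \<Rightarrow> real^'n"
    and h' :: "real^'n \<Rightarrow> ((real^'n) \<Rightarrow>\<^sub>L (real^'n))"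
  assumes "group G" and "countable (carrier G)"
    and "affine_action G A b"
    and "open W" and "connected W"
    and "\<And>x. x \<in> W \<Longrightarrow> (h has_derivative blinfun_apply (h' x)) (at x)"
    and "continuous_on W h'"
    and "\<And>x. x \<in> W \<Longrightarrow> h x \<in> affine_orbit G A b x"
  shows "\<exists>g\<in>carrier G. \<forall>x\<in>W. h x = A g *v x + b g"
proof -
  have pieces: "\<exists>g\<in>carrier G. h x = A g *v x + b g" if "x \<in> W" for x
    using assms(8)[OF that] by (auto simp: affine_orbit_def)
  have segments: "h z = h y + h' y (z - y)" if "closed_segment y z \<subseteq> W" for y z
    using segment_affine_if_countably_many_affine_pieces[OF assms(6,7,2) _ pieces that]
    by (simp add: matrix_vector_mul_linear)
  obtain M :: "(real^'n) \<Rightarrow>\<^sub>L (real^'n)" and c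
    where affine_h: "\<And>x. x \<in> W \<Longrightarrow> h x = M x + c"
    using affine_if_affine_on_segments[OF assms(4,5,6) segments] by blast
  show ?thesis
  proof (cases "W = {}")
    case True
    then show ?thesis using group.is_monoid[OF assms(1)] monoid.one_closed by blast
  next
    case False
    have affine_sets: "affine {x. M x + c = A g *v x + b g}" for g
      using bounded_linear.linear[OF blinfun.bounded_linear_right] matrix_vector_mul_linear
      by (rule affine_Collect_linear_eq)
    have cover: "W \<subseteq> (\<Union>g\<in>carrier G. {x. M x + c = A g *v x + b g})"
    proof
      fix x assume "x \<in> W"
      then obtain g where "g \<in> carrier G" "h x = A g *v x + b g" using pieces by blast
      then show "x \<in> (\<Union>g\<in>carrier G. {x. M x + c = A g *v x + b g})"
        using affine_h[OF \<open>x \<in> W\<close>] by auto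
    qed
    obtain g where "g \<in> carrier G" and agree: "{x. M x + c = A g *v x + b g} = UNIV"
      using countable_affine_cover_of_open_imp_UNIV[OF assms(2) affine_sets assms(4) False cover]
      by blast
    have "M x + c = A g *v x + b g" for x
      using agree by (simp add: set_eq_iff)
    then show ?thesis using \<open>g \<in> carrier G\<close> affine_h by auto
  qed
qed

end
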